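(* Let $(X,\Sigma)$ be a measurable space and $\boldsymbol{\mu}=(\mu_t)_{t\ge0}$ a family of monotone measures on $\Sigma$ such that $\mu_t$ is continuous from below for every $t>0$. For $t\ge0$ and $E\in\Sigma\setminus\{\emptyset\}$ define $\mathsf{A}_t(f|E)=\sup\{a\in[0,\infty)\colon \{x\in E\colon f(x)<a\}\in\mathcal{N}_{\mu_t}\}$ for $f\in\mathbf{F}$, and $\mathsf{A}_t(\cdot|\emptyset)=\infty$. Then for every $t>0$ and every $f\in\mathbf{F}\setminus\{0_X\}$, $$\sup\{\mu_t(E)\colon \mathsf{A}_t(f|E)\ge t,\ E\in\Sigma\}=\mu_t(\{x\in X\colon f(x)\ge t\}).$$
   Context: $0_X$ is the zero function on $X$. $\mathbf{F}$ denotes the set of all $\Sigma$-measurable, nonnegative, bounded functions $f\colon X\to[0,\infty)$. A monotone measure is a map $\mu\colon\Sigma\to[0,\infty]$ with $\mu(B)\le\mu(C)$ whenever $B\subseteq C$, $\mu(\emptyset)=0$ and $\mu(X)>0$; it is continuous from below if $\mu(\bigcup_n E_n)=\lim_n\mu(E_n)$ for every nondecreasing sequence $E_1\subseteq E_2\subseteq\cdots$ in $\Sigma$. For a monotone measure $\mu$, $\mathcal{N}_\mu$ is the set of null sets: $N\in\mathcal{N}_\mu$ iff $N\in\Sigma$ and $\mu(E\cup N)=\mu(E)$ for every $E\in\Sigma$. Thus $\mathsf{A}_t(f|E)$ is the essential infimum of $f$ on $E$ with respect to $\mu_t$. *)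

theory Defs
  imports "HOL-Analysis.Analysis"
begin

text \<open>Measurable space (X, Sigma) is represented by a measure M via space M and sets M;
  only its sigma-algebra is used.\<close>

definition monotone_measure :: "'a measure \<Rightarrow> ('a set \<Rightarrow> ennreal) \<Rightarrow> bool" where
  "monotone_measure M \<mu> \<longleftrightarrow>
     (\<forall>B\<in>sets M. \<forall>C\<in>sets M. B \<subseteq> C \<longrightarrow> \<mu> B \<le> \<mu> C) \<and>
     \<mu> {} = 0 \<and> \<mu> (space M) > 0"

definition continuous_from_below :: "'a measure \<Rightarrow> ('a set \<Rightarrow> ennreal) \<Rightarrow> bool" where
  "continuous_from_below M \<mu> \<longleftrightarrow>
     (\<forall>E :: nat \<Rightarrow> 'a set. range E \<subseteq> sets M \<longrightarrow> incseq E \<longrightarrow>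
        (\<lambda>n. \<mu> (E n)) \<longlonglongrightarrow> \<mu> (\<Union>n. E n))"

definition null_sets_mm :: "'a measure \<Rightarrow> ('a set \<Rightarrow> ennreal) \<Rightarrow> 'a set set" where
  "null_sets_mm M \<mu> = {N \<in> sets M. \<forall>E\<in>sets M. \<mu> (E \<union> N) = \<mu> E}"

definition F_class :: "'a measure \<Rightarrow> ('a \<Rightarrow> real) set" where
  "F_class M = {f. f \<in> borel_measurable M \<and> (\<forall>x\<in>space M. 0 \<le> f x) \<and>
                   (\<exists>B. \<forall>x\<in>space M. f x \<le> B)}"

definition ess_A :: "'a measure \<Rightarrow> ('a set \<Rightarrow> ennreal) \<Rightarrow> ('a \<Rightarrow> real) \<Rightarrow> 'a set \<Rightarrow> ennreal" where
  "ess_A M \<mu> f E = (if E = {} then \<infinity> else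
     Sup {ennreal a | a. 0 \<le> a \<and> {x\<in>E. f x < a} \<in> null_sets_mm M \<mu>})"

end

theory Submission
  imports Defs
begin

text \<open>If \<open>\<mu>\<^sub>t\<close> is continuous from below and \<open>A\<^sub>t(f|E) \<ge> t\<close>, then every set
  \<open>{x\<in>E. f x < t - 1/(n+1)}\<close> is null, and so is their increasing union \<open>{x\<in>E. f x < t}\<close>.
  Hence \<open>E\<close> lies in the superlevel set \<open>{f \<ge> t}\<close> up to a null set, giving \<open>\<mu>\<^sub>t(E) \<le> \<mu>\<^sub>t{f \<ge> t}\<close>;
  the superlevel set itself is admissible, so the supremum is attained.\<close>

lemma null_sets_mm_subset:
  assumes m: "monotone_measure M m" and N: "N \<in> null_sets_mm M m"
    and N': "N' \<in> sets M" "N' \<subseteq> N"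
  shows "N' \<in> null_sets_mm M m"
  unfolding null_sets_mm_def
proof (intro CollectI conjI ballI N')
  fix E assume E: "E \<in> sets M"
  have NM: "N \<in> sets M" using N by (simp add: null_sets_mm_def)
  have "m (E \<union> N') \<le> m (E \<union> N)"
    using m E N' NM unfolding monotone_measure_def by (meson Un_mono order_refl sets.Un)
  also have "\<dots> = m E" using N E by (simp add: null_sets_mm_def)
  finally have "m (E \<union> N') \<le> m E" .
  moreover have "m E \<le> m (E \<union> N')"
    using m E N' unfolding monotone_measure_def by (meson Un_upper1 sets.Un)
  ultimately show "m (E \<union> N') = m E" by (rule antisym)
qed

lemma null_sets_mm_incseq_UN:
  assumes c: "continuous_from_below M m"
    and N: "\<And>n. N n \<in> null_sets_mm M m" and inc: "incseq N"
  shows "(\<Union>n. N n) \<in> null_sets_mm M m"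
  unfolding null_sets_mm_def
proof (intro CollectI conjI ballI)
  have NM: "range N \<subseteq> sets M" using N by (auto simp: null_sets_mm_def)
  then show "(\<Union>n. N n) \<in> sets M" by blast
  fix E assume E: "E \<in> sets M"
  have "range (\<lambda>n. E \<union> N n) \<subseteq> sets M" "incseq (\<lambda>n. E \<union> N n)"
    using E NM inc by (auto simp: incseq_def)
  then have "(\<lambda>n. m (E \<union> N n)) \<longlonglongrightarrow> m (\<Union>n. E \<union> N n)"
    using c unfolding continuous_from_below_def by blast
  moreover have "m (E \<union> N n) = m E" for n
    using N[of n] E by (simp add: null_sets_mm_def)
  ultimately have "(\<lambda>n. m E) \<longlonglongrightarrow> m (E \<union> (\<Union>n. N n))" by simp
  then show "m (E \<union> (\<Union>n. N n)) = m E" using LIMSEQ_unique tendsto_const by blast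
qed

lemma sublevel_in_sets:
  fixes f :: "'a \<Rightarrow> real"
  assumes "f \<in> borel_measurable M" "E \<in> sets M"
  shows "{x\<in>E. f x < a} \<in> sets M"
proof -
  have "{x\<in>space M. f x < a} \<in> sets M" using assms(1) by measurable
  moreover have "{x\<in>E. f x < a} = E \<inter> {x\<in>space M. f x < a}"
    using sets.sets_into_space[OF assms(2)] by auto
  ultimately show ?thesis using assms(2) by auto
qed

lemma ess_A_geI:
  assumes "0 \<le> a" "{x\<in>E. f x < a} \<in> null_sets_mm M m"
  shows "ennreal a \<le> ess_A M m f E"
  using assms by (auto simp: ess_A_def intro: Sup_upper)

lemma null_sets_mm_sublevel_less_ess_A:
  assumes m: "monotone_measure M m" and f: "f \<in> borel_measurable M" and E: "E \<in> sets M"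
    and a: "ennreal a < ess_A M m f E"
  shows "{x\<in>E. f x < a} \<in> null_sets_mm M m"
proof (cases "E = {}")
  case True
  then show ?thesis by (simp add: null_sets_mm_def)
next
  case False
  with a obtain b where b: "0 \<le> b" "{x\<in>E. f x < b} \<in> null_sets_mm M m"
    and ab: "ennreal a < ennreal b"
    by (auto simp: ess_A_def less_Sup_iff)
  have "a < b"
  proof (cases "0 \<le> a")
    case True
    with ab show ?thesis by (simp add: ennreal_less_iff)
  next
    case False
    with ab show ?thesis by (simp add: ennreal_neg)
  qed
  then show ?thesis
    by (intro null_sets_mm_subset[OF m b(2) sublevel_in_sets[OF f E]]) auto
qed

lemma null_sets_mm_sublevel_le_ess_A:
  assumes m: "monotone_measure M m" and c: "continuous_from_below M m"
    and f: "f \<in> borel_measurable M" and E: "E \<in> sets M"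
    and t: "0 < t" "ennreal t \<le> ess_A M m f E"
  shows "{x\<in>E. f x < t} \<in> null_sets_mm M m"
proof -
  define N where "N n = {x\<in>E. f x < t - 1 / real (Suc n)}" for n
  have "N n \<in> null_sets_mm M m" for n
  proof -
    have "ennreal (t - 1 / real (Suc n)) < ennreal t" using t(1) by (simp add: ennreal_lessI)
    then show ?thesis
      unfolding N_def using t(2) by (intro null_sets_mm_sublevel_less_ess_A[OF m f E]) simp
  qed
  moreover have "incseq N"
    by (rule incseq_SucI) (auto simp: N_def frac_le elim!: less_le_trans)
  moreover have "{x\<in>E. f x < t} = (\<Union>n. N n)"
  proof (intro equalityI subsetI)
    fix x assume x: "x \<in> {x\<in>E. f x < t}"
    then obtain k where "inverse (real (Suc k)) < t - f x"
      using reals_Archimedean[of "t - f x"] by auto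
    with x show "x \<in> (\<Union>n. N n)" by (auto simp: N_def field_simps)
  qed (auto simp: N_def intro: less_trans[of _ "t - 1 / real (Suc _)"])
  ultimately show ?thesis using null_sets_mm_incseq_UN[OF c] by metis
qed

lemma le_superlevel_of_le_ess_A:
  assumes m: "monotone_measure M m" and c: "continuous_from_below M m"
    and f: "f \<in> borel_measurable M" and E: "E \<in> sets M"
    and t: "0 < t" "ennreal t \<le> ess_A M m f E"
  shows "m E \<le> m {x\<in>space M. t \<le> f x}"
proof -
  let ?S = "{x\<in>space M. t \<le> f x}"
  have S: "?S \<in> sets M" using f by measurable
  have "E \<subseteq> ?S \<union> {x\<in>E. f x < t}"
    using sets.sets_into_space[OF E] by auto
  then have "m E \<le> m (?S \<union> {x\<in>E. f x < t})"
    using m E S sublevel_in_sets[OF f E] unfolding monotone_measure_def by blast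
  also have "\<dots> = m ?S"
    using null_sets_mm_sublevel_le_ess_A[OF assms] S by (simp add: null_sets_mm_def)
  finally show ?thesis .
qed

theorem proposition3p20:
  fixes M :: "'a measure" and \<mu> :: "real \<Rightarrow> 'a set \<Rightarrow> ennreal"
    and f :: "'a \<Rightarrow> real" and t :: real
  assumes mono: "\<And>s. 0 \<le> s \<Longrightarrow> monotone_measure M (\<mu> s)"
    and cfb: "\<And>s. 0 < s \<Longrightarrow> continuous_from_below M (\<mu> s)"
    and t_pos: "0 < t"
    and fF: "f \<in> F_class M"
    and f_nz: "\<exists>x\<in>space M. f x \<noteq> 0"
  shows "(SUP E \<in> {E \<in> sets M. ess_A M (\<mu> t) f E \<ge> ennreal t}. \<mu> t E)
           = \<mu> t {x \<in> space M. f x \<ge> t}"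
proof (rule antisym)
  have m: "monotone_measure M (\<mu> t)" and c: "continuous_from_below M (\<mu> t)"
    and f: "f \<in> borel_measurable M"
    using mono cfb t_pos fF by (auto simp: F_class_def)
  then show "(SUP E \<in> {E \<in> sets M. ess_A M (\<mu> t) f E \<ge> ennreal t}. \<mu> t E)
      \<le> \<mu> t {x \<in> space M. f x \<ge> t}"
    using le_superlevel_of_le_ess_A[OF m c f _ t_pos] by (auto intro: SUP_least)
  let ?S = "{x \<in> space M. f x \<ge> t}"
  have "?S \<in> sets M" using f by measurable
  moreover have "ennreal t \<le> ess_A M (\<mu> t) f ?S"
    using t_pos by (intro ess_A_geI) (auto simp: null_sets_mm_def not_less[symmetric])
  ultimately show "\<mu> t ?S \<le> (SUP E \<in> {E \<in> sets M. ess_A M (\<mu> t) f E \<ge> ennreal t}. \<mu> t E)"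
    by (auto intro: SUP_upper)
qed

end
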